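(* Let $I$ be a finite set of positive integers and $m=\max(I\cup\{0\})$. Then, as polynomials in $n$, $$d(I;n)=\sum_{k=0}^{m} a_k(I)\binom{n-m}{k},$$ where $a_0(I)=0$ and, for $1\le k\le m$, $a_k(I)$ is the number of permutations $\pi\in\mathfrak S_{2m}$ with $\mathrm{Des}\,\pi=I$ such that $\{\pi_1,\dots,\pi_m\}\cap[m+1,2m]=[m+1,m+k]$. Moreover $a_k(I)>0$ for all $1\le k\le m$.
   Context: For integers $a\le b$, $[a,b]=\{a,a+1,\dots,b\}$. For a permutation $\pi=\pi_1\cdots\pi_n$ of $[n]$, $\mathrm{Des}\,\pi=\{i\mid \pi_i>\pi_{i+1}\}$. For $n>m$, $d(I;n)=\#\{\pi\in\mathfrak S_n\mid \mathrm{Des}\,\pi=I\}$; this is a polynomial in $n$ of degree $m$, and the identity is an identity of polynomials (equivalently, it holds for all integers $n>m$). *)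

theory Defs
  imports "HOL-Combinatorics.Combinatorics"
begin

definition Des :: "nat \<Rightarrow> (nat \<Rightarrow> nat) \<Rightarrow> nat set" where
  "Des n \<pi> = {i. 1 \<le> i \<and> i < n \<and> \<pi> i > \<pi> (Suc i)}"

definition dcount :: "nat set \<Rightarrow> nat \<Rightarrow> nat" where
  "dcount I n = card {\<pi> . \<pi> permutes {1..n} \<and> Des n \<pi> = I}"

definition maxI :: "nat set \<Rightarrow> nat" where
  "maxI I = Max (insert 0 I)"

definition acoef :: "nat set \<Rightarrow> nat \<Rightarrow> nat" where
  "acoef I k = (let m = maxI I in
     card {\<pi> . \<pi> permutes {1..2*m} \<and> Des (2*m) \<pi> = I \<and>
             \<pi> ` {1..m} \<inter> {m+1..2*m} = {m+1..m+k}})"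

end

theory Submission
  imports Defs
begin

text \<open>Let \<open>m = max I\<close>. Positions after \<open>m\<close> are never descents, so the entries of a permutation
  with descent set \<open>I\<close> that follow position \<open>m\<close> increase. Sort these permutations by the set \<open>B\<close> of
  values above \<open>m\<close> occurring among \<open>\<pi>\<^sub>1, \<dots>, \<pi>\<^sub>m\<close>. Exchanging two adjacent values \<open>a \<in> B\<close>,
  \<open>b \<notin> B\<close> above \<open>m\<close> preserves the descent set, so the size of a class depends only on \<open>k = |B|\<close>;
  for \<open>B = [m+1, m+k]\<close> the values above \<open>m + k\<close> stand at the end in increasing order, so it does
  not depend on \<open>n\<close> either and equals \<open>a\<^sub>k(I)\<close>. There are \<open>(n - m choose k)\<close> such sets \<open>B\<close>.
  For \<open>a\<^sub>k(I) > 0\<close>, shift a permutation of \<open>[m]\<close> with descent set \<open>I - {m}\<close> up by \<open>k\<close> and append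
  \<open>1, \<dots>, k\<close>; and \<open>a\<^sub>0(I) = 0\<close> since \<open>\<pi>\<^sub>m \<le> m < \<pi>\<^sub>m\<^sub>+\<^sub>1\<close> whenever \<open>\<pi>\<close> maps \<open>[m]\<close> into itself.\<close>

lemma Des_Suc_eq: "\<pi> N \<le> \<pi> (Suc N) \<Longrightarrow> Des (Suc N) \<pi> = Des N \<pi>"
  unfolding Des_def by (auto simp: less_Suc_eq)

definition interval_rotation :: "nat \<Rightarrow> nat \<Rightarrow> nat \<Rightarrow> nat" where
  "interval_rotation m k i =
     (if 1 \<le> i \<and> i \<le> m then i + k else if m < i \<and> i \<le> m + k then i - m else i)"

lemma interval_rotation_inverse: "interval_rotation k m (interval_rotation m k i) = i"
  by (auto simp: interval_rotation_def)

lemma interval_rotation_permutes: "interval_rotation m k permutes {1..m + k}"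
proof (rule bij_imp_permutes)
  show "bij_betw (interval_rotation m k) {1..m + k} {1..m + k}"
    by (rule bij_betw_byWitness[where f' = "interval_rotation k m"])
       (auto simp: interval_rotation_inverse interval_rotation_def)
qed (auto simp: interval_rotation_def)

lemma interval_rotation_less_Suc: "m < i \<Longrightarrow> interval_rotation m k i < interval_rotation m k (Suc i)"
  by (auto simp: interval_rotation_def)

lemma Des_interval_rotation_comp:
  assumes \<sigma>: "\<sigma> permutes {1..m}" and "1 \<le> m" "1 \<le> k" "m + k \<le> N"
  shows "Des N (interval_rotation m k \<circ> \<sigma>) = insert m (Des m \<sigma>)"
proof -
  let ?\<pi> = "interval_rotation m k \<circ> \<sigma>"
  have head: "?\<pi> i = \<sigma> i + k" and head_range: "\<sigma> i \<in> {1..m}" if "1 \<le> i" "i \<le> m" for i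
    using permutes_in_image[OF \<sigma>, of i] that by (auto simp: interval_rotation_def)
  have tail: "?\<pi> i = interval_rotation m k i" if "m < i" for i
    using permutes_not_in[OF \<sigma>, of i] that by simp
  have "?\<pi> (Suc i) < ?\<pi> i \<longleftrightarrow> i \<in> insert m (Des m \<sigma>)" if i: "1 \<le> i" "i < N" for i
  proof -
    consider "i < m" | "i = m" | "m < i" by linarith
    then show ?thesis
    proof cases
      case 1
      then show ?thesis using i head[of i] head[of "Suc i"] by (simp add: Des_def)
    next
      case 2
      then show ?thesis using i head[of m] head_range[of m] tail[of "Suc m"] assms
        by (simp add: interval_rotation_def)
    next
      case 3
      then show ?thesis using tail[of i] tail[of "Suc i"] interval_rotation_less_Suc[OF 3, of k]
        by (auto simp: Des_def)
    qed
  qed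
  moreover have "insert m (Des m \<sigma>) \<subseteq> {1..<N}" using assms by (auto simp: Des_def)
  ultimately show ?thesis unfolding Des_def[of N] by auto
qed

lemma exists_permutes_Des: "D \<subseteq> {1..<m} \<Longrightarrow> \<exists>\<sigma>. \<sigma> permutes {1..m} \<and> Des m \<sigma> = D"
proof (induction m arbitrary: D)
  case 0
  then show ?case by (intro exI[of _ id]) (auto simp: Des_def permutes_id)
next
  case (Suc m)
  have "D - {m} \<subseteq> {1..<m}" using Suc.prems by auto
  then obtain \<sigma> where \<sigma>: "\<sigma> permutes {1..m}" "Des m \<sigma> = D - {m}"
    using Suc.IH by blast
  show ?case
  proof (cases "m \<in> D")
    case True
    then have "1 \<le> m" using Suc.prems by auto
    have "interval_rotation m 1 \<circ> \<sigma> permutes {1..Suc m}"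
      using permutes_compose[OF permutes_subset[OF \<sigma>(1)] interval_rotation_permutes[of m 1]]
      by simp
    moreover have "Des (Suc m) (interval_rotation m 1 \<circ> \<sigma>) = D"
      using Des_interval_rotation_comp[OF \<sigma>(1) \<open>1 \<le> m\<close>, of 1 "Suc m"] \<sigma>(2) True by auto
    ultimately show ?thesis by blast
  next
    case False
    have "\<sigma> m \<le> m" using permutes_in_image[OF \<sigma>(1), of m] permutes_not_in[OF \<sigma>(1), of 0]
      by (cases "m = 0") auto
    then have "Des (Suc m) \<sigma> = D"
      using Des_Suc_eq[of \<sigma> m] permutes_not_in[OF \<sigma>(1), of "Suc m"] \<sigma>(2) False by auto
    then show ?thesis using permutes_subset[OF \<sigma>(1), of "{1..Suc m}"] by auto
  qed
qed

lemma permutes_atLeastAtMost_Suc_iff: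
  "(\<pi> permutes {1..Suc N} \<and> \<pi> (Suc N) = Suc N) \<longleftrightarrow> \<pi> permutes {1..N}"
proof
  assume p: "\<pi> permutes {1..Suc N} \<and> \<pi> (Suc N) = Suc N"
  have "x = Suc N" if "x \<in> {1..Suc N} - {1..N}" for x
    using that by (simp; linarith)
  then show "\<pi> permutes {1..N}"
    using p permutes_superset[of \<pi> "{1..Suc N}" "{1..N}"] by blast
next
  assume p: "\<pi> permutes {1..N}"
  show "\<pi> permutes {1..Suc N} \<and> \<pi> (Suc N) = Suc N"
    using permutes_subset[OF p, of "{1..Suc N}"] permutes_not_in[OF p, of "Suc N"] by simp
qed

lemma le_if_no_Des_beyond:
  assumes "Des n \<pi> \<subseteq> {..m}" "m < i" "i \<le> j" "j \<le> n"
  shows "\<pi> i \<le> \<pi> j"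
  using assms(3,4)
proof (induction j rule: dec_induct)
  case (step j)
  then have "j \<notin> Des n \<pi>" using assms(1,2) by auto
  then have "\<pi> j \<le> \<pi> (Suc j)" using step.hyps assms(2) step.prems by (auto simp: Des_def)
  then show ?case using step by simp
qed simp

definition desc_class :: "nat \<Rightarrow> nat set \<Rightarrow> nat \<Rightarrow> nat set \<Rightarrow> (nat \<Rightarrow> nat) set" where
  "desc_class m I n B = {\<pi>. \<pi> permutes {1..n} \<and> Des n \<pi> = I \<and> \<pi> ` {1..m} \<inter> {m + 1..n} = B}"

lemma finite_desc_class: "finite (desc_class m I n B)"
  by (rule finite_subset[OF _ finite_permutations[of "{1..n}"]]) (auto simp: desc_class_def)

lemma desc_class_Suc_fixes_top:
  assumes "I \<subseteq> {..m}" "m \<le> N" "B \<subseteq> {m + 1..N}" and \<pi>: "\<pi> \<in> desc_class m I (Suc N) B"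
  shows "\<pi> (Suc N) = Suc N"
proof -
  have p: "\<pi> permutes {1..Suc N}" and d: "Des (Suc N) \<pi> = I"
    and im: "\<pi> ` {1..m} \<inter> {m + 1..Suc N} = B"
    using \<pi> by (auto simp: desc_class_def)
  obtain j where j: "j \<in> {1..Suc N}" "\<pi> j = Suc N"
    using permutes_image[OF p] by (metis atLeastAtMost_iff imageE le_add1 plus_1_eq_Suc order_refl)
  \<comment> \<open>\<open>Suc N \<notin> B\<close>, so the largest value stands after position \<open>m\<close>, where entries increase.\<close>
  have "m < j"
  proof (rule ccontr)
    assume "\<not> m < j"
    then have "Suc N \<in> B" using im j assms(2) by force
    then show False using assms(3) by auto
  qed
  then have "Suc N \<le> \<pi> (Suc N)"
    using le_if_no_Des_beyond[of "Suc N" \<pi> m j "Suc N"] d assms(1) j by auto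
  moreover have "\<pi> (Suc N) \<le> Suc N" using permutes_in_image[OF p, of "Suc N"] by simp
  ultimately show ?thesis by simp
qed

lemma desc_class_Suc:
  assumes "I \<subseteq> {..m}" "m \<le> N" "B \<subseteq> {m + 1..N}"
  shows "desc_class m I (Suc N) B = desc_class m I N B"
proof -
  have same: "Des (Suc N) \<pi> = Des N \<pi> \<and>
      \<pi> ` {1..m} \<inter> {m + 1..Suc N} = \<pi> ` {1..m} \<inter> {m + 1..N}"
    if p: "\<pi> permutes {1..N}" for \<pi>
  proof
    have "\<pi> N \<le> N" using permutes_in_image[OF p, of N] permutes_not_in[OF p, of 0]
      by (cases "N = 0") auto
    then show "Des (Suc N) \<pi> = Des N \<pi>"
      using Des_Suc_eq permutes_not_in[OF p, of "Suc N"] by simp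
    have "\<pi> ` {1..m} \<subseteq> {1..N}" using permutes_image[OF p] assms(2) by auto
    then show "\<pi> ` {1..m} \<inter> {m + 1..Suc N} = \<pi> ` {1..m} \<inter> {m + 1..N}"
      by (auto simp: le_Suc_eq)
  qed
  show ?thesis
  proof (intro set_eqI iffI)
    fix \<pi> assume \<pi>: "\<pi> \<in> desc_class m I (Suc N) B"
    then have "\<pi> permutes {1..N}"
      using desc_class_Suc_fixes_top[OF assms] permutes_atLeastAtMost_Suc_iff
      by (auto simp: desc_class_def)
    then show "\<pi> \<in> desc_class m I N B" using \<pi> same by (auto simp: desc_class_def)
  next
    fix \<pi> assume "\<pi> \<in> desc_class m I N B"
    then show "\<pi> \<in> desc_class m I (Suc N) B"
      using same permutes_atLeastAtMost_Suc_iff[of \<pi> N] by (auto simp: desc_class_def)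
  qed
qed

lemma desc_class_shrink:
  assumes "I \<subseteq> {..m}" "m \<le> N" "B \<subseteq> {m + 1..N}" "N \<le> n"
  shows "desc_class m I n B = desc_class m I N B"
  using assms(4)
proof (induction n rule: dec_induct)
  case (step k)
  have "desc_class m I (Suc k) B = desc_class m I k B"
    using desc_class_Suc[OF assms(1), of k B] step.hyps assms(2,3) by force
  then show ?case using step.IH by simp
qed simp

lemma transpose_adjacent_less_iff:
  assumes "a = Suc b \<or> b = Suc a" "x \<noteq> y" "\<not> (x = a \<and> y = b)" "\<not> (x = b \<and> y = a)"
  shows "transpose a b y < transpose a b x \<longleftrightarrow> y < (x::nat)"
  using assms by (auto simp: transpose_def)

lemma desc_class_tail_start_le:
  assumes I: "I \<subseteq> {..m}" and \<pi>: "\<pi> \<in> desc_class m I n B" and "B \<noteq> {}"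
  shows "\<pi> (m + 1) \<le> m"
proof -
  have p: "\<pi> permutes {1..n}" and d: "Des n \<pi> = I" and im: "\<pi> ` {1..m} \<inter> {m + 1..n} = B"
    using \<pi> by (auto simp: desc_class_def)
  have "\<not> {1..m} \<subseteq> \<pi> ` {1..m}"
  proof
    assume "{1..m} \<subseteq> \<pi> ` {1..m}"
    moreover have "card (\<pi> ` {1..m}) \<le> card {1..m}" by (rule card_image_le) simp
    ultimately have "\<pi> ` {1..m} = {1..m}" by (intro card_seteq[symmetric]) auto
    then show False using im \<open>B \<noteq> {}\<close> by auto
  qed
  then obtain t where t: "t \<in> {1..m}" "t \<notin> \<pi> ` {1..m}" by blast
  have "t \<in> \<pi> ` {1..n}" using permutes_image[OF p] t(1) im \<open>B \<noteq> {}\<close> by auto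
  then obtain j where j: "j \<in> {1..n}" "\<pi> j = t" by blast
  have "m < j" using j t by auto
  then have "\<pi> (m + 1) \<le> \<pi> j" using le_if_no_Des_beyond[of n \<pi> m] d I j by auto
  then show ?thesis using j t by simp
qed

lemma transpose_comp_mem_desc_class:
  assumes I: "I \<subseteq> {..m}" and \<pi>: "\<pi> \<in> desc_class m I n B"
    and a: "a \<in> B" and b: "b \<in> {m + 1..n} - B" and adj: "a = Suc b \<or> b = Suc a"
  shows "transpose a b \<circ> \<pi> \<in> desc_class m I n (transpose a b ` B)"
proof -
  have p: "\<pi> permutes {1..n}" and d: "Des n \<pi> = I" and im: "\<pi> ` {1..m} \<inter> {m + 1..n} = B"
    using \<pi> by (auto simp: desc_class_def)
  have "a \<in> {m + 1..n}" using a im by blast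
  then have \<tau>: "transpose a b permutes {m + 1..n}"
    using b by (intro permutes_swap_id) auto
  obtain q where q: "q \<in> {1..m}" "\<pi> q = a" using a im by blast
  have pos_a: "i \<le> m" if "\<pi> i = a" for i
    using injD[OF permutes_inj[OF p], of i q] q that by simp
  have pos_b: "m < i" if "\<pi> i = b" "i \<in> {1..n}" for i
  proof (rule ccontr)
    assume "\<not> m < i"
    then have "b \<in> \<pi> ` {1..m}" using that by force
    then show False using b im by blast
  qed
  have "transpose a b \<circ> \<pi> permutes {1..n}"
    using permutes_compose[OF p permutes_subset[OF \<tau>]] by simp
  \<comment> \<open>The swap can only flip a comparison of the values \<open>a\<close> (in the first \<open>m\<close> positions)
    and \<open>b\<close> (after them) standing side by side, i.e. at positions \<open>m, m + 1\<close>; but \<open>\<pi> (m + 1) \<le> m < b\<close>.\<close>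
  moreover have "Des n (transpose a b \<circ> \<pi>) = Des n \<pi>"
  proof -
    have "transpose a b (\<pi> (Suc i)) < transpose a b (\<pi> i) \<longleftrightarrow> \<pi> (Suc i) < \<pi> i"
      if i: "1 \<le> i" "i < n" for i
    proof (rule transpose_adjacent_less_iff[OF adj])
      show "\<pi> i \<noteq> \<pi> (Suc i)" using permutes_inj[OF p] by (metis injD n_not_Suc_n)
      show "\<not> (\<pi> i = a \<and> \<pi> (Suc i) = b)"
      proof
        assume "\<pi> i = a \<and> \<pi> (Suc i) = b"
        moreover from this have "i = m" using pos_a pos_b i by fastforce
        ultimately show False
          using desc_class_tail_start_le[OF I \<pi>] a b by auto
      qed
      show "\<not> (\<pi> i = b \<and> \<pi> (Suc i) = a)"
        using pos_a pos_b i by fastforce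
    qed
    then show ?thesis unfolding Des_def by auto
  qed
  moreover have "(transpose a b \<circ> \<pi>) ` {1..m} \<inter> {m + 1..n} = transpose a b ` B"
  proof -
    have "(transpose a b \<circ> \<pi>) ` {1..m} \<inter> {m + 1..n}
        = transpose a b ` (\<pi> ` {1..m}) \<inter> transpose a b ` {m + 1..n}"
      using permutes_image[OF \<tau>] by (simp add: image_comp)
    also have "\<dots> = transpose a b ` B"
      using im by (simp add: image_Int[symmetric])
    finally show ?thesis .
  qed
  ultimately show ?thesis using d by (simp add: desc_class_def)
qed

lemma card_desc_class_transpose:
  assumes I: "I \<subseteq> {..m}" and B: "B \<subseteq> {m + 1..n}"
    and a: "a \<in> B" and b: "b \<in> {m + 1..n} - B" and adj: "a = Suc b \<or> b = Suc a"
  shows "card (desc_class m I n (transpose a b ` B)) = card (desc_class m I n B)"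
proof -
  have "transpose a b ` B \<subseteq> {m + 1..n}" and "b \<in> transpose a b ` B"
    and "a \<in> {m + 1..n} - transpose a b ` B"
    using a b B by (auto simp: transpose_def)
  from transpose_comp_mem_desc_class[OF I _ this(2,3)] adj
  have swap_back: "transpose a b \<circ> \<pi> \<in> desc_class m I n B"
    if "\<pi> \<in> desc_class m I n (transpose a b ` B)" for \<pi>
    using that by (auto simp: transpose_commute image_comp)
  have "bij_betw ((\<circ>) (transpose a b)) (desc_class m I n B) (desc_class m I n (transpose a b ` B))"
    by (rule bij_betw_byWitness[where f' = "(\<circ>) (transpose a b)"])
       (auto simp: comp_assoc[symmetric] intro: transpose_comp_mem_desc_class[OF I _ a b adj] swap_back)
  then show ?thesis by (simp add: bij_betw_same_card)
qed

lemma exists_gap_if_not_interval: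
  assumes fin: "finite B" and B: "B \<subseteq> {m + 1..}" "B \<noteq> {m + 1..m + card B}"
  shows "\<exists>v. m + 1 \<le> v \<and> v \<notin> B \<and> Suc v \<in> B"
proof -
  have "\<not> {m + 1..m + card B} \<subseteq> B"
  proof
    assume "{m + 1..m + card B} \<subseteq> B"
    then have "{m + 1..m + card B} = B" by (rule card_seteq[OF fin]) simp
    then show False using B(2) by simp
  qed
  \<comment> \<open>The least element \<open>y\<close> of \<open>B\<close> above a value \<open>w\<close> missing from the initial segment has \<open>y - 1 \<notin> B\<close>.\<close>
  then obtain w where "w \<in> {m + 1..m + card B}" "w \<notin> B" by blast
  then have w: "m + 1 \<le> w" "w \<le> m + card B" "w \<notin> B" by simp_all
  have "\<not> B \<subseteq> {m + 1..<w}"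
  proof
    assume "B \<subseteq> {m + 1..<w}"
    then have "card B \<le> w - (m + 1)" using card_mono[of "{m + 1..<w}" B] by simp
    then show False using w(1,2) by linarith
  qed
  then obtain x where x: "x \<in> B" "x \<notin> {m + 1..<w}" by blast
  have "m + 1 \<le> x" using x(1) B(1) by auto
  then have "w \<le> x" using x(2) by simp
  moreover have "x \<noteq> w" using x(1) w(3) by blast
  ultimately have S: "x \<in> {x \<in> B. w < x}" using x(1) by simp
  define y where "y = Min {x \<in> B. w < x}"
  have fS: "finite {x \<in> B. w < x}" using fin by simp
  have "y \<in> {x \<in> B. w < x}" unfolding y_def using Min_in[OF fS] S by blast
  then have y: "y \<in> B" "w < y" by simp_all
  have "y - 1 \<notin> B"
  proof
    assume "y - 1 \<in> B"
    moreover have "y - 1 \<noteq> w" using w(3) \<open>y - 1 \<in> B\<close> by auto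
    ultimately have "y - 1 \<in> {x \<in> B. w < x}" using y(2) by auto
    then have "Min {x \<in> B. w < x} \<le> y - 1" by (rule Min_le[OF fS])
    then have "y \<le> y - 1" unfolding y_def[symmetric] .
    then show False using y by simp
  qed
  then show ?thesis using w y by (intro exI[of _ "y - 1"]) auto
qed

lemma card_desc_class_eq_interval:
  assumes I: "I \<subseteq> {..m}" and "B \<subseteq> {m + 1..n}"
  shows "card (desc_class m I n B) = card (desc_class m I n {m + 1..m + card B})"
  using assms(2)
proof (induction "\<Sum>B" arbitrary: B rule: less_induct)
  case less
  have fin: "finite B" using less.prems finite_subset by blast
  show ?case
  proof (cases "B = {m + 1..m + card B}")
    case False
    moreover have "B \<subseteq> {m + 1..}" using less.prems by auto
    ultimately obtain v where v: "m + 1 \<le> v" "v \<notin> B" "Suc v \<in> B"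
      using exists_gap_if_not_interval[OF fin] by blast
    define B' where "B' = transpose (Suc v) v ` B"
    have B': "B' = insert v (B - {Suc v})"
      unfolding B'_def using v by (auto simp: transpose_def image_iff)
    have "v \<in> {m + 1..n}" using v less.prems by auto
    then have "card (desc_class m I n B) = card (desc_class m I n B')"
      unfolding B'_def using card_desc_class_transpose[OF I less.prems v(3)] v(2) by auto
    moreover have "card B' = card B" unfolding B'_def by (simp add: card_image)
    moreover have "\<Sum>B' < \<Sum>B"
      using B' fin v member_le_sum[of "Suc v" B id] by (simp add: sum_diff1_nat)
    moreover have "B' \<subseteq> {m + 1..n}" using B' less.prems \<open>v \<in> {m + 1..n}\<close> by auto
    ultimately show ?thesis using less.hyps by metis
  qed simp
qed

lemma acoef_eq_card_desc_class:
  "acoef I k = card (desc_class (maxI I) I (2 * maxI I) {maxI I + 1..maxI I + k})"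
  by (simp add: acoef_def desc_class_def Let_def)

lemma le_maxI: "finite I \<Longrightarrow> i \<in> I \<Longrightarrow> i \<le> maxI I"
  unfolding maxI_def by simp

lemma maxI_mem: "finite I \<Longrightarrow> 0 < maxI I \<Longrightarrow> maxI I \<in> I"
  using Max_in[of "insert 0 I"] unfolding maxI_def by fastforce

lemma card_desc_class_eq_acoef:
  assumes "finite I" "maxI I \<le> n" "B \<subseteq> {maxI I + 1..n}" "card B \<le> maxI I"
  shows "card (desc_class (maxI I) I n B) = acoef I (card B)"
proof -
  define m k where "m = maxI I" and "k = card B"
  have I: "I \<subseteq> {..m}" using le_maxI[OF assms(1)] by (auto simp: m_def)
  have "k \<le> card {m + 1..n}"
    using card_mono[OF _ assms(3)] by (simp add: m_def k_def)
  then have "m + k \<le> n" using assms(2) by (simp add: m_def)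
  have "card (desc_class m I n B) = card (desc_class m I n {m + 1..m + k})"
    using card_desc_class_eq_interval[OF I] assms(3) by (simp add: m_def k_def)
  also have "desc_class m I n {m + 1..m + k} = desc_class m I (m + k) {m + 1..m + k}"
    using desc_class_shrink[OF I] \<open>m + k \<le> n\<close> by simp
  also have "\<dots> = desc_class m I (2 * m) {m + 1..m + k}"
    using desc_class_shrink[OF I, of "m + k" _ "2 * m"] assms(4) by (simp add: m_def k_def)
  finally show ?thesis by (simp add: acoef_eq_card_desc_class m_def k_def)
qed

lemma desc_class_empty:
  assumes "m \<in> I" "m < n"
  shows "desc_class m I n {} = {}"
proof (rule ccontr)
  assume "desc_class m I n {} \<noteq> {}"
  then obtain \<pi> where p: "\<pi> permutes {1..n}" and d: "Des n \<pi> = I"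
    and im: "\<pi> ` {1..m} \<inter> {m + 1..n} = {}"
    by (auto simp: desc_class_def)
  have "m \<ge> 1" using assms(1) d by (auto simp: Des_def)
  have "\<pi> ` {1..m} \<subseteq> {1..m}"
  proof (rule image_subsetI)
    fix x assume x: "x \<in> {1..m}"
    then have "\<pi> x \<notin> {m + 1..n}" using im by blast
    moreover have "\<pi> x \<in> {1..n}" using permutes_in_image[OF p, of x] x assms(2) by simp
    ultimately show "\<pi> x \<in> {1..m}" by auto
  qed
  moreover have "inj_on \<pi> {1..m}" using permutes_inj[OF p] by (rule inj_on_subset) simp
  then have "card (\<pi> ` {1..m}) = card {1..m}" by (rule card_image)
  ultimately have fill: "\<pi> ` {1..m} = {1..m}" by (rule card_subset_eq[rotated]) simp
  have "\<pi> (m + 1) \<notin> \<pi> ` {1..m}"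
  proof
    assume "\<pi> (m + 1) \<in> \<pi> ` {1..m}"
    then obtain x where "x \<in> {1..m}" "\<pi> (m + 1) = \<pi> x" by blast
    then show False using injD[OF permutes_inj[OF p]] by fastforce
  qed
  moreover have "\<pi> (m + 1) \<in> {1..n}" using permutes_in_image[OF p] assms(2) by simp
  ultimately have "m < \<pi> (m + 1)" using fill by auto
  moreover have "\<pi> m \<in> {1..m}"
  proof -
    have "\<pi> m \<in> \<pi> ` {1..m}" using \<open>m \<ge> 1\<close> by simp
    then show ?thesis using fill by simp
  qed
  ultimately have "m \<notin> Des n \<pi>" by (simp add: Des_def)
  then show False using assms(1) d by simp
qed

lemma acoef_zero:
  assumes "finite I" "0 \<notin> I" "I \<noteq> {}"
  shows "acoef I 0 = 0"
proof -
  obtain i where "i \<in> I" using assms(3) by blast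
  then have "0 < maxI I" using le_maxI[OF assms(1)] assms(2) by (fastforce intro: gr0I)
  then have "desc_class (maxI I) I (2 * maxI I) {} = {}"
    using desc_class_empty maxI_mem[OF assms(1)] by simp
  then show ?thesis by (simp add: acoef_eq_card_desc_class)
qed

lemma acoef_pos:
  assumes "finite I" "0 \<notin> I" "k \<in> {1..maxI I}"
  shows "0 < acoef I k"
proof -
  define m where "m = maxI I"
  have k: "1 \<le> k" "k \<le> m" using assms(3) by (auto simp: m_def)
  have mI: "m \<in> I" using maxI_mem[OF assms(1)] k by (simp add: m_def)
  have "I - {m} \<subseteq> {1..<m}"
  proof
    fix i assume i: "i \<in> I - {m}"
    then have "i \<le> m" "i \<noteq> m" using le_maxI[OF assms(1)] by (auto simp: m_def)
    moreover have "i \<noteq> 0" using i assms(2) by (metis DiffD1)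
    ultimately show "i \<in> {1..<m}" by simp
  qed
  then obtain \<sigma> where \<sigma>: "\<sigma> permutes {1..m}" "Des m \<sigma> = I - {m}"
    using exists_permutes_Des by blast
  let ?\<pi> = "interval_rotation m k \<circ> \<sigma>"
  have "?\<pi> permutes {1..2 * m}"
    using k by (intro permutes_compose permutes_subset[OF \<sigma>(1)]
        permutes_subset[OF interval_rotation_permutes]) auto
  moreover have "Des (2 * m) ?\<pi> = I"
    using Des_interval_rotation_comp[OF \<sigma>(1), of k "2 * m"] \<sigma>(2) mI k by auto
  moreover have "?\<pi> ` {1..m} = (\<lambda>i. i + k) ` {1..m}"
    unfolding image_comp[symmetric] permutes_image[OF \<sigma>(1)]
    by (rule image_cong) (auto simp: interval_rotation_def)
  then have "?\<pi> ` {1..m} \<inter> {m + 1..2 * m} = {m + 1..m + k}"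
    using k by auto
  ultimately have "?\<pi> \<in> desc_class m I (2 * m) {m + 1..m + k}"
    by (simp add: desc_class_def)
  then show ?thesis
    using finite_desc_class card_gt_0_iff by (fastforce simp: acoef_eq_card_desc_class m_def)
qed

lemma dcount_eq_sum_desc_class:
  "dcount I n = (\<Sum>B | B \<subseteq> {m + 1..n} \<and> card B \<le> m. card (desc_class m I n B))"
proof -
  let ?P = "{\<pi>. \<pi> permutes {1..n} \<and> Des n \<pi> = I}"
  let ?g = "\<lambda>\<pi>. \<pi> ` {1..m} \<inter> {m + 1..n}"
  have "card (?g \<pi>) \<le> m" for \<pi>
    using card_mono[of "\<pi> ` {1..m}" "?g \<pi>"] card_image_le[of "{1..m}" \<pi>] by simp
  then have "?g ` ?P \<subseteq> {B. B \<subseteq> {m + 1..n} \<and> card B \<le> m}" by auto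
  moreover have "finite ?P" by (rule finite_subset[OF _ finite_permutations]) auto
  ultimately have "card ?P = (\<Sum>B | B \<subseteq> {m + 1..n} \<and> card B \<le> m. card {\<pi> \<in> ?P. ?g \<pi> = B})"
    unfolding card_eq_sum by (subst sum.group[symmetric]) auto
  also have "\<dots> = (\<Sum>B | B \<subseteq> {m + 1..n} \<and> card B \<le> m. card (desc_class m I n B))"
    by (intro sum.cong refl arg_cong[where f = card]) (auto simp: desc_class_def)
  finally show ?thesis by (simp add: dcount_def)
qed

lemma sum_subsets_by_card:
  fixes f :: "nat \<Rightarrow> 'a::comm_semiring_1"
  assumes "finite S"
  shows "(\<Sum>B | B \<subseteq> S \<and> card B \<le> m. f (card B)) = (\<Sum>k=0..m. of_nat (card S choose k) * f k)"
proof -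
  let ?Bs = "{B. B \<subseteq> S \<and> card B \<le> m}"
  have "finite ?Bs" using assms by simp
  then have "(\<Sum>B\<in>?Bs. f (card B)) = (\<Sum>k=0..m. \<Sum>B | B \<in> ?Bs \<and> card B = k. f (card B))"
    by (subst sum.group[symmetric, of _ "{0..m}" card]) auto
  also have "\<dots> = (\<Sum>k=0..m. of_nat (card S choose k) * f k)"
  proof (rule sum.cong[OF refl])
    fix k assume "k \<in> {0..m}"
    then have "{B. B \<in> ?Bs \<and> card B = k} = {B. B \<subseteq> S \<and> card B = k}" by auto
    then show "(\<Sum>B | B \<in> ?Bs \<and> card B = k. f (card B)) = of_nat (card S choose k) * f k"
      using n_subsets[OF assms, of k] by simp
  qed
  finally show ?thesis .
qed

theorem theorem3p3:
  fixes I :: "nat set"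
  assumes "finite I" and "0 \<notin> I"
  shows "(\<forall>n > maxI I. dcount I n = (\<Sum>k=0..maxI I. acoef I k * ((n - maxI I) choose k)))
         \<and> (I \<noteq> {} \<longrightarrow> acoef I 0 = 0)
         \<and> (\<forall>k \<in> {1..maxI I}. acoef I k > 0)"
proof (intro conjI allI impI ballI)
  fix n assume n: "maxI I < n"
  let ?m = "maxI I"
  have "dcount I n = (\<Sum>B | B \<subseteq> {?m + 1..n} \<and> card B \<le> ?m. card (desc_class ?m I n B))"
    by (rule dcount_eq_sum_desc_class)
  also have "\<dots> = (\<Sum>B | B \<subseteq> {?m + 1..n} \<and> card B \<le> ?m. acoef I (card B))"
    using card_desc_class_eq_acoef[OF assms(1)] n by (intro sum.cong) auto
  also have "\<dots> = (\<Sum>k=0..?m. ((n - ?m) choose k) * acoef I k)"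
    by (simp add: sum_subsets_by_card)
  finally show "dcount I n = (\<Sum>k=0..?m. acoef I k * ((n - ?m) choose k))"
    by (simp add: mult.commute)
qed (use acoef_zero acoef_pos assms in auto)

end
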